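(* Let $r\geq 1$, let $\mathbf a=(a_1,\ldots,a_r)$ be positive integers, let $D\ge1$ be a common multiple of $a_1,\ldots,a_r$, and let $d_{\mathbf a,m}$ ($0\le m\le r-1$) be the $D$-periodic functions with $p_{\mathbf a}(n)=\sum_{m=0}^{r-1}d_{\mathbf a,m}(n)n^m$ for all $n\ge 0$. Let $\alpha_1<\cdots<\alpha_{rD}$ be integers with $\alpha_1\ge 2$, and let $\Delta$ be the determinant of the $rD\times rD$ matrix whose entry in row $j$ ($1\le j\le rD$) and column $mD+v$ ($0\le m\le r-1$, $1\le v\le D$) is $\dfrac{D^{\alpha_j+m}B_{\alpha_j+m}(v/D)}{\alpha_j+m}$. For $0\le m\le r-1$, $1\le v\le D$, let $\Delta^{m,v}$ be the determinant obtained from this matrix by replacing its $(mD+v)$-th column by the column with entries $\dfrac{(-1)^{r-1}(\alpha_j-1)!\,D}{(\alpha_j+r-1)!}B_{\alpha_j+r-1}(\mathbf a)$, $1\le j\le rD$. If $\Delta\neq 0$, then $d_{\mathbf a,m}(v)=\Delta^{m,v}/\Delta$ for all $1\le v\le D$, $0\le m\le r-1$, and moreover for every $n\in\mathbb N$, $$p_{\mathbf a}(n)=\frac{1}{\Delta}\sum_{m=0}^{r-1}\Delta^{m,v}n^m,$$ where $v\in\{1,\ldots,D\}$ is such that $v\equiv n \pmod D$.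
   Context: $p_{\mathbf a}(n)$ is the number of integer solutions $(x_1,\ldots,x_r)$ of $\sum_{i=1}^r a_ix_i=n$ with all $x_i\ge 0$; it is known that there are unique functions $d_{\mathbf a,m}:\mathbb Z_{\ge0}\to\mathbb Q$ with $d_{\mathbf a,m}(n+D)=d_{\mathbf a,m}(n)$ and $p_{\mathbf a}(n)=\sum_{m=0}^{r-1}d_{\mathbf a,m}(n)n^m$ for all $n\ge 0$ (so $d_{\mathbf a,m}(D)=d_{\mathbf a,m}(0)$). $B_n(x)$ is the Bernoulli polynomial, $\frac{ze^{xz}}{e^z-1}=\sum_{n\ge0}B_n(x)\frac{z^n}{n!}$. The Bernoulli–Barnes numbers $B_j(\mathbf a)$ are defined by $\frac{z^r}{(e^{a_1z}-1)\cdots(e^{a_rz}-1)}=\sum_{j\ge0}B_j(\mathbf a)\frac{z^j}{j!}$. *)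

theory Defs
  imports "HOL-Computational_Algebra.Formal_Power_Series" "Jordan_Normal_Form.Determinant"
begin

definition bernpoly :: "nat \<Rightarrow> real \<Rightarrow> real" where
  "bernpoly n x = fact n * fps_nth (fps_X * fps_exp x / (fps_exp 1 - 1)) n"

definition barnes :: "nat \<Rightarrow> nat list \<Rightarrow> real" where
  "barnes j a = fact j *
     fps_nth (fps_X ^ length a / (\<Prod>i<length a. (fps_exp (real (a ! i)) - 1))) j"

definition part_count :: "nat list \<Rightarrow> nat \<Rightarrow> nat" where
  "part_count a n = card {x :: nat list. length x = length a \<and> (\<Sum>i<length a. a ! i * x ! i) = n}"

text \<open>The rD x rD matrix (0-based: row i is row j = i+1, column c = m D + v - 1).\<close>
definition coeff_mat :: "nat \<Rightarrow> nat \<Rightarrow> (nat \<Rightarrow> nat) \<Rightarrow> real mat" where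
  "coeff_mat r D alpha = mat (r * D) (r * D) (\<lambda>(i, c).
      let j = i + 1; m = c div D; v = c mod D + 1 in
      real D ^ (alpha j + m) * bernpoly (alpha j + m) (real v / real D) / real (alpha j + m))"

definition repl_mat :: "nat list \<Rightarrow> nat \<Rightarrow> (nat \<Rightarrow> nat) \<Rightarrow> nat \<Rightarrow> nat \<Rightarrow> real mat" where
  "repl_mat a D alpha m v = (let r = length a in mat (r * D) (r * D) (\<lambda>(i, c).
      if c = m * D + v - 1 then
        (let j = i + 1 in
         (-1) ^ (r - 1) * fact (alpha j - 1) * real D / fact (alpha j + r - 1)
           * barnes (alpha j + r - 1) a)
      else coeff_mat r D alpha $$ (i, c)))"

end

(*
  With F(x) = sum_n p_a(n) x^n = 1 / prod_i (1 - x^(a_i)), the quasipolynomial form of p_a gives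
  F - 1 = sum_(m,v) d_(a,m)(v) H_(v,m) where H_(v,m)(x) = sum over n >= 1, n = v (mod D) of n^m x^n,
  and (1 - x^D)^(m+1) H_(v,m) is a polynomial.  Once the denominators are cleared, x = e^z may be
  substituted: H_(v,0)(e^z) = e^(vz) / (1 - e^(Dz)) is -1/(Dz) times the generating function of the
  B_n(v/D) (Dz)^n / n!, and x d/dx turns into d/dz.  Comparing the coefficients of z^k, k >= 1, in
  F(e^z) - 1 = (-1)^r / prod_i (e^(a_i z) - 1) - 1 yields the linear relations
    sum_(m,v) d_(a,m)(v) D^(k+m+1) B_(k+m+1)(v/D) / (k+m+1) = (-1)^(r-1) k! D / (k+r)! B_(k+r)(a).
  For k = alpha_j - 1 these form the square system with matrix Delta, solved by Cramer's rule.
  That D is a common multiple of the a_i only matters for the existence of the d_(a,m), which is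
  assumed; the alpha_j enter only through alpha_j >= 2.
*)
theory Submission
  imports Defs "HOL-Computational_Algebra.Polynomial_FPS"
begin

no_notation vec_index (infixl \<open>$\<close> 100)
unbundle fps_syntax

section \<open>Counting restricted partitions\<close>

definition part_vectors :: "nat list \<Rightarrow> nat \<Rightarrow> nat list set" where
  "part_vectors a n = {x. length x = length a \<and> (\<Sum>i<length a. a ! i * x ! i) = n}"

lemma part_count_eq_card: "part_count a n = card (part_vectors a n)"
  unfolding part_count_def part_vectors_def ..

lemma sum_Cons_mult_nth:
  "(\<Sum>i<Suc (length a). (b # a) ! i * (y # ys) ! i) = b * y + (\<Sum>i<length a. a ! i * ys ! i)"
  by (simp only: sum.lessThan_Suc_shift) simp

lemma finite_part_vectors:
  assumes "\<forall>i<length a. a ! i > 0"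
  shows "finite (part_vectors a n)"
proof (rule finite_subset)
  show "part_vectors a n \<subseteq> {x. set x \<subseteq> {0..n} \<and> length x = length a}"
  proof
    fix x assume x: "x \<in> part_vectors a n"
    have "x ! i \<le> n" if "i < length x" for i
    proof -
      have "a ! i > 0" using assms that x by (simp add: part_vectors_def)
      then have "x ! i \<le> a ! i * x ! i" by simp
      also have "\<dots> \<le> (\<Sum>i<length a. a ! i * x ! i)"
        using that x by (intro member_le_sum) (auto simp: part_vectors_def)
      finally show ?thesis using x by (simp add: part_vectors_def)
    qed
    then show "x \<in> {x. set x \<subseteq> {0..n} \<and> length x = length a}"
      using x by (auto simp: part_vectors_def in_set_conv_nth)
  qed
  show "finite {x. set x \<subseteq> {0..n} \<and> length x = length a}"
    by (rule finite_lists_length_eq) simp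
qed

lemma part_vectors_Cons:
  "part_vectors (b # a) n = Cons 0 ` part_vectors a n \<union>
     (if b \<le> n then (\<lambda>x. Suc (hd x) # tl x) ` part_vectors (b # a) (n - b) else {})"
proof (intro equalityI subsetI)
  fix x assume x: "x \<in> part_vectors (b # a) n"
  then obtain y ys where xy: "x = y # ys" by (cases x) (auto simp: part_vectors_def)
  have e: "b * y + (\<Sum>i<length a. a ! i * ys ! i) = n" "length ys = length a"
    using x xy by (simp_all add: part_vectors_def sum_Cons_mult_nth del: sum.lessThan_Suc)
  show "x \<in> Cons 0 ` part_vectors a n \<union>
     (if b \<le> n then (\<lambda>x. Suc (hd x) # tl x) ` part_vectors (b # a) (n - b) else {})"
  proof (cases y)
    case 0
    then show ?thesis using e xy by (auto simp: part_vectors_def)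
  next
    case (Suc z)
    then have "b \<le> n" "z # ys \<in> part_vectors (b # a) (n - b)"
      using e by (simp_all add: part_vectors_def sum_Cons_mult_nth del: sum.lessThan_Suc)
    then show ?thesis using xy Suc by (auto intro!: image_eqI[where x = "z # ys"])
  qed
next
  fix x assume "x \<in> Cons 0 ` part_vectors a n \<union>
     (if b \<le> n then (\<lambda>x. Suc (hd x) # tl x) ` part_vectors (b # a) (n - b) else {})"
  then consider ys where "ys \<in> part_vectors a n" "x = 0 # ys"
    | y ys where "b \<le> n" "y # ys \<in> part_vectors (b # a) (n - b)" "x = Suc y # ys"
    by (auto simp: part_vectors_def split: if_splits) (metis hd_Cons_tl length_0_conv nat.distinct(1))
  then show "x \<in> part_vectors (b # a) n"
  proof cases
    case (2 y ys)
    then have "b * y + (\<Sum>i<length a. a ! i * ys ! i) = n - b" "length ys = length a"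
      by (simp_all add: part_vectors_def sum_Cons_mult_nth del: sum.lessThan_Suc)
    then show ?thesis
      using 2 by (simp add: part_vectors_def sum_Cons_mult_nth del: sum.lessThan_Suc)
  qed (simp add: part_vectors_def sum_Cons_mult_nth del: sum.lessThan_Suc)
qed

lemma part_count_Cons:
  assumes "\<forall>i<length (b # a). (b # a) ! i > 0"
  shows "part_count (b # a) n = part_count a n + (if b \<le> n then part_count (b # a) (n - b) else 0)"
proof -
  have "finite (part_vectors a n)" "finite (part_vectors (b # a) (n - b))"
    using assms by (intro finite_part_vectors; auto)+
  moreover have "inj_on (\<lambda>x. Suc (hd x) # tl x) (part_vectors (b # a) (n - b))"
  proof (rule inj_onI)
    fix x y assume "x \<in> part_vectors (b # a) (n - b)" "y \<in> part_vectors (b # a) (n - b)"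
      and "Suc (hd x) # tl x = Suc (hd y) # tl y"
    then show "x = y" by (cases x; cases y) (auto simp: part_vectors_def)
  qed
  moreover have "inj_on (Cons 0) (part_vectors a n)"
    "Cons 0 ` part_vectors a n \<inter> (\<lambda>x. Suc (hd x) # tl x) ` part_vectors (b # a) (n - b) = {}"
    by (auto intro: inj_onI)
  ultimately show ?thesis
    unfolding part_count_eq_card part_vectors_Cons[of b a n]
    by (auto simp: card_Un_disjoint card_image)
qed

lemma part_count_Nil: "part_count [] n = (if n = 0 then 1 else 0)"
proof -
  have "{x :: nat list. length x = 0 \<and> 0 = n} = (if n = 0 then {[]} else {})" by auto
  then show ?thesis by (simp add: part_count_def)
qed

lemma part_count_0: "\<forall>i<length a. a ! i > 0 \<Longrightarrow> part_count a 0 = 1"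
proof (induction a)
  case (Cons b a)
  have "\<forall>i<length a. a ! i > 0" using Cons.prems by auto
  then show ?case using part_count_Cons[OF Cons.prems, of 0] Cons.IH by auto
qed (simp add: part_count_Nil)

definition part_fps :: "nat list \<Rightarrow> real fps" where
  "part_fps a = Abs_fps (\<lambda>n. real (part_count a n))"

lemma part_fps_times_prod:
  "\<forall>i<length a. a ! i > 0 \<Longrightarrow> part_fps a * (\<Prod>i<length a. 1 - fps_X ^ (a ! i)) = 1"
proof (induction a)
  case Nil
  have "part_fps [] = 1" by (intro fps_ext) (simp add: part_fps_def part_count_Nil)
  then show ?case by simp
next
  case (Cons b a)
  have "part_fps (b # a) * (1 - fps_X ^ b) = part_fps a"
  proof (rule fps_ext)
    fix n
    have "(part_fps (b # a) * (1 - fps_X ^ b)) $ n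
        = part_fps (b # a) $ n - (fps_X ^ b * part_fps (b # a)) $ n"
      by (simp add: algebra_simps)
    then show "(part_fps (b # a) * (1 - fps_X ^ b)) $ n = part_fps a $ n"
      using part_count_Cons[OF Cons.prems, of n] by (auto simp: fps_X_power_mult_nth part_fps_def)
  qed
  moreover have "\<forall>i<length a. a ! i > 0" using Cons.prems by auto
  ultimately show ?case
    using Cons.IH by (simp add: prod.lessThan_Suc_shift mult.assoc[symmetric] del: prod.lessThan_Suc)
qed

section \<open>Periodic power series\<close>

definition fps_euler :: "'a :: comm_ring_1 fps \<Rightarrow> 'a fps" where
  "fps_euler f = fps_X * fps_deriv f"

lemma fps_euler_nth [simp]: "fps_euler f $ n = of_nat n * f $ n"
  by (cases n) (simp_all add: fps_euler_def)

lemma fps_euler_mult: "fps_euler (f * g) = fps_euler f * g + f * fps_euler g"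
  by (simp add: fps_euler_def algebra_simps)

lemma fps_euler_power: "fps_euler (f ^ Suc n) = of_nat (Suc n) * f ^ n * fps_euler f"
  by (simp only: fps_euler_def fps_deriv_power') (simp add: algebra_simps)

lemma fps_of_poly_pCons_0_pderiv: "fps_of_poly (pCons 0 (pderiv p)) = fps_euler (fps_of_poly p)"
  by (simp add: fps_euler_def fps_of_poly_pCons fps_of_poly_pderiv mult.commute)

definition periodic_power_fps :: "nat \<Rightarrow> nat \<Rightarrow> nat \<Rightarrow> real fps" where
  "periodic_power_fps D v m =
     Abs_fps (\<lambda>n. if 1 \<le> n \<and> n mod D = v mod D then real n ^ m else 0)"

lemma fps_euler_periodic_power_fps:
  "fps_euler (periodic_power_fps D v m) = periodic_power_fps D v (Suc m)"
  by (intro fps_ext) (simp add: periodic_power_fps_def)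

lemma one_minus_X_power_times_periodic_power_fps_0:
  assumes "1 \<le> v" "v \<le> D"
  shows "(1 - fps_X ^ D) * periodic_power_fps D v 0 = fps_X ^ v"
proof (rule fps_ext)
  fix n
  have "((1 - fps_X ^ D) * periodic_power_fps D v 0) $ n
      = periodic_power_fps D v 0 $ n - (fps_X ^ D * periodic_power_fps D v 0) $ n"
    by (simp add: algebra_simps)
  also have "\<dots> = (if n = v then 1 else 0)"
  proof (cases "n < D")
    case True
    then show ?thesis using assms
      by (auto simp: fps_X_power_mult_nth periodic_power_fps_def mod_if split: if_splits)
  next
    case False
    then obtain k where k: "n = D + k" by (metis le_Suc_ex not_less)
    have "v mod D = 0 \<longleftrightarrow> v = D"
      using assms by (auto simp: le_less dest: dvd_imp_le)
    then show ?thesis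
      using k assms by (cases "k = 0") (auto simp: fps_X_power_mult_nth periodic_power_fps_def)
  qed
  finally show "((1 - fps_X ^ D) * periodic_power_fps D v 0) $ n = fps_X ^ v $ n" by simp
qed

fun periodic_power_numer :: "nat \<Rightarrow> nat \<Rightarrow> nat \<Rightarrow> real poly" where
  "periodic_power_numer D v 0 = monom 1 v"
| "periodic_power_numer D v (Suc m) =
     (1 - monom 1 D) * pCons 0 (pderiv (periodic_power_numer D v m))
     + smult (real (Suc m) * real D) (monom 1 D * periodic_power_numer D v m)"

lemma one_minus_X_power_times_periodic_power_fps:
  assumes "1 \<le> v" "v \<le> D"
  shows "(1 - fps_X ^ D) ^ Suc m * periodic_power_fps D v m
       = fps_of_poly (periodic_power_numer D v m)"
proof (induction m)
  case 0
  then show ?case using one_minus_X_power_times_periodic_power_fps_0[OF assms]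
    by (simp add: fps_of_poly_monom')
next
  case (Suc m)
  define U :: "real fps" where "U = 1 - fps_X ^ D"
  define H where "H = periodic_power_fps D v"
  define A where "A = fps_of_poly (periodic_power_numer D v m)"
  have euler_U: "fps_euler U = - of_nat D * fps_X ^ D"
    by (rule fps_ext) (simp add: U_def)
  have IH: "U ^ Suc m * H m = A"
    using Suc.IH by (simp add: U_def H_def A_def)
  then have "fps_euler (U ^ Suc m * H m) = fps_euler A" by simp
  then have "of_nat (Suc m) * U ^ m * fps_euler U * H m + U ^ Suc m * H (Suc m) = fps_euler A"
    by (simp only: fps_euler_mult fps_euler_power H_def fps_euler_periodic_power_fps)
  then have "U ^ Suc m * H (Suc m) = fps_euler A - of_nat (Suc m) * U ^ m * fps_euler U * H m"
    by (metis add_diff_cancel_left')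
  then have "U ^ Suc (Suc m) * H (Suc m)
      = U * fps_euler A + of_nat (Suc m) * of_nat D * fps_X ^ D * (U ^ Suc m * H m)"
    by (simp add: euler_U algebra_simps)
  also have "\<dots> = U * fps_euler A + fps_const (real (Suc m) * real D) * (fps_X ^ D * A)"
    by (simp only: IH fps_const_mult[symmetric] fps_of_nat mult.assoc)
  also have "\<dots> = fps_of_poly (periodic_power_numer D v (Suc m))"
    by (simp only: periodic_power_numer.simps U_def A_def fps_of_poly_add fps_of_poly_mult
        fps_of_poly_diff fps_of_poly_1 fps_of_poly_pCons_0_pderiv fps_of_poly_smult
        fps_of_poly_monom')
  finally show ?case by (simp only: U_def H_def)
qed

section \<open>The substitution x = exp z\<close>

definition exp_subst :: "real poly \<Rightarrow> real fps" where
  "exp_subst p = poly (map_poly fps_const p) (fps_exp 1)"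

lemma exp_subst_pCons: "exp_subst (pCons c p) = fps_const c + fps_exp 1 * exp_subst p"
  by (simp add: exp_subst_def map_poly_pCons)

lemma exp_subst_0 [simp]: "exp_subst 0 = 0"
  by (simp add: exp_subst_def)

lemma exp_subst_1 [simp]: "exp_subst 1 = 1"
  by (simp add: exp_subst_def)

lemma exp_subst_add: "exp_subst (p + q) = exp_subst p + exp_subst q"
proof -
  have "map_poly fps_const (p + q) = map_poly fps_const p + map_poly fps_const q"
    by (intro poly_eqI) (simp add: coeff_map_poly)
  then show ?thesis by (simp add: exp_subst_def)
qed

lemma exp_subst_smult: "exp_subst (smult c p) = fps_const c * exp_subst p"
proof -
  have "map_poly fps_const (smult c p) = smult (fps_const c) (map_poly fps_const p)"
    by (intro poly_eqI) (simp add: coeff_map_poly)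
  then show ?thesis by (simp add: exp_subst_def)
qed

lemma exp_subst_minus: "exp_subst (- p) = - exp_subst p"
proof -
  have "map_poly fps_const (- p) = - map_poly fps_const p"
    by (intro poly_eqI) (simp add: coeff_map_poly)
  then show ?thesis by (simp add: exp_subst_def)
qed

lemma exp_subst_diff: "exp_subst (p - q) = exp_subst p - exp_subst q"
  using exp_subst_add[of p "- q"] by (simp add: exp_subst_minus)

lemma exp_subst_mult: "exp_subst (p * q) = exp_subst p * exp_subst q"
proof (induction p rule: pCons_induct)
  case (pCons c p)
  show ?case
    by (simp only: mult_pCons_left exp_subst_add exp_subst_smult exp_subst_pCons pCons.IH)
       (simp add: algebra_simps)
qed simp

lemma exp_subst_power: "exp_subst (p ^ n) = exp_subst p ^ n"
  by (induction n) (simp_all add: exp_subst_mult)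

lemma exp_subst_sum: "exp_subst (sum f A) = (\<Sum>x\<in>A. exp_subst (f x))"
  by (induction A rule: infinite_finite_induct) (simp_all add: exp_subst_add)

lemma exp_subst_prod: "exp_subst (prod f A) = (\<Prod>x\<in>A. exp_subst (f x))"
  by (induction A rule: infinite_finite_induct) (simp_all add: exp_subst_mult)

lemma exp_subst_monom: "exp_subst (monom 1 k) = fps_exp (real k)"
  by (simp add: exp_subst_def map_poly_monom poly_monom fps_exp_power_mult)

lemma fps_deriv_exp_subst: "fps_deriv (exp_subst p) = exp_subst (pCons 0 (pderiv p))"
proof (induction p rule: pCons_induct)
  case (pCons c p)
  have "pCons 0 (pderiv (pCons c p)) = pCons 0 (p + pCons 0 (pderiv p))"
    by (simp add: pderiv_pCons)
  then show ?case
    by (simp add: exp_subst_pCons pCons.IH exp_subst_add algebra_simps)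
qed simp

section \<open>Bernoulli polynomials\<close>

definition exp_minus_one_quot :: "nat \<Rightarrow> real fps" where
  "exp_minus_one_quot c = Abs_fps (\<lambda>n. real c ^ (n + 1) / fact (n + 1))"

lemma fps_X_times_exp_minus_one_quot: "fps_X * exp_minus_one_quot c = fps_exp (real c) - 1"
proof (rule fps_ext)
  fix n show "(fps_X * exp_minus_one_quot c) $ n = (fps_exp (real c) - 1) $ n"
    by (cases n) (simp_all add: exp_minus_one_quot_def algebra_simps)
qed

lemma exp_minus_one_quot_nth_0: "exp_minus_one_quot c $ 0 = real c"
  by (simp add: exp_minus_one_quot_def)

definition fps_dilate :: "'a :: comm_ring_1 \<Rightarrow> 'a fps \<Rightarrow> 'a fps" where
  "fps_dilate c f = Abs_fps (\<lambda>n. c ^ n * f $ n)"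

lemma fps_dilate_mult: "fps_dilate c (f * g) = fps_dilate c f * fps_dilate c g"
proof (rule fps_ext)
  fix n
  have "fps_dilate c (f * g) $ n = (\<Sum>i=0..n. c ^ i * f $ i * (c ^ (n - i) * g $ (n - i)))"
    by (simp add: fps_dilate_def fps_mult_nth sum_distrib_left mult_ac flip: power_add)
  then show "fps_dilate c (f * g) $ n = (fps_dilate c f * fps_dilate c g) $ n"
    by (simp add: fps_dilate_def fps_mult_nth mult_ac)
qed

lemma fps_dilate_inverse:
  fixes f :: "'a :: field fps"
  assumes "f $ 0 \<noteq> 0"
  shows "fps_dilate c (inverse f) = inverse (fps_dilate c f)"
proof (rule fps_inverse_unique[symmetric])
  have "fps_dilate c 1 = 1" by (intro fps_ext) (simp add: fps_dilate_def)
  then show "fps_dilate c f * fps_dilate c (inverse f) = 1"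
    using inverse_mult_eq_1'[OF assms] by (simp flip: fps_dilate_mult)
qed

lemma fps_dilate_exp: "fps_dilate c (fps_exp x) = fps_exp (c * x :: 'a :: field_char_0)"
  by (intro fps_ext) (simp add: fps_dilate_def power_mult_distrib)

lemma bernpoly_conv_fps: "bernpoly n x = fact n * (fps_exp x * inverse (exp_minus_one_quot 1)) $ n"
proof -
  define W where "W = exp_minus_one_quot 1"
  have W: "W $ 0 \<noteq> 0" by (simp add: W_def exp_minus_one_quot_nth_0)
  have "fps_X * fps_exp x = (fps_exp x * inverse W) * (fps_X * W)"
    using inverse_mult_eq_1[OF W] by (simp add: mult_ac)
  moreover have "fps_exp 1 - 1 = fps_X * W"
    using fps_X_times_exp_minus_one_quot[of 1] by (simp add: W_def)
  ultimately have "fps_X * fps_exp x / (fps_exp 1 - 1)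
      = (fps_exp x * inverse W) * (fps_X * W) / (fps_X * W)"
    by simp
  also have "\<dots> = fps_exp x * inverse W"
    using W by (intro fps_divide_times_eq) auto
  finally show ?thesis by (simp add: bernpoly_def W_def)
qed

text \<open>\<open>periodic_exp_fps D v m\<close> is \<open>z\<^sup>m\<^sup>+\<^sup>1\<close> times the Laurent series in \<open>z\<close> of
  \<open>periodic_power_fps D v m\<close> evaluated at \<open>x = e\<^sup>z\<close>; for \<open>m = 0\<close> this is
  \<open>z e\<^sup>v\<^sup>z / (1 - e\<^sup>D\<^sup>z)\<close>, and the Euler operator \<open>x d/dx\<close> becomes \<open>d/dz\<close>.\<close>
fun periodic_exp_fps :: "nat \<Rightarrow> nat \<Rightarrow> nat \<Rightarrow> real fps" where
  "periodic_exp_fps D v 0 = - fps_exp (real v) * inverse (exp_minus_one_quot D)"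
| "periodic_exp_fps D v (Suc m) =
     fps_euler (periodic_exp_fps D v m) - of_nat (Suc m) * periodic_exp_fps D v m"

lemma one_minus_exp_times_periodic_exp_fps_0:
  assumes "D \<ge> 1"
  shows "(1 - fps_exp (real D)) * periodic_exp_fps D v 0 = fps_X * fps_exp (real v)"
proof -
  have "1 - fps_exp (real D) = - (fps_X * exp_minus_one_quot D)"
    by (simp add: fps_X_times_exp_minus_one_quot)
  then have "(1 - fps_exp (real D)) * periodic_exp_fps D v 0
      = fps_X * fps_exp (real v) * (exp_minus_one_quot D * inverse (exp_minus_one_quot D))"
    by (simp add: mult_ac)
  also have "\<dots> = fps_X * fps_exp (real v)"
    using assms by (simp add: inverse_mult_eq_1' exp_minus_one_quot_nth_0)
  finally show ?thesis .
qed

lemma one_minus_exp_power_times_periodic_exp_fps: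
  assumes "D \<ge> 1"
  shows "(1 - fps_exp (real D)) ^ Suc m * periodic_exp_fps D v m
       = fps_X ^ Suc m * exp_subst (periodic_power_numer D v m)"
proof (induction m)
  case 0
  then show ?case
    using one_minus_exp_times_periodic_exp_fps_0[OF assms] by (simp add: exp_subst_monom)
next
  case (Suc m)
  define u where "u = 1 - fps_exp (real D)"
  define Y where "Y = periodic_exp_fps D v m"
  define A where "A = exp_subst (periodic_power_numer D v m)"
  define c :: "real fps" where "c = of_nat (Suc m)"
  have IH: "u ^ Suc m * Y = fps_X ^ Suc m * A"
    using Suc.IH by (simp add: u_def Y_def A_def)
  then have "fps_deriv (u ^ Suc m * Y) = fps_deriv (fps_X ^ Suc m * A)" by simp
  then have "u ^ Suc m * fps_deriv Y + c * fps_deriv u * u ^ m * Y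
      = fps_X ^ Suc m * fps_deriv A + c * 1 * fps_X ^ m * A"
    by (simp only: fps_deriv_mult fps_deriv_power' diff_Suc_1 c_def fps_deriv_fps_X)
  then have Y': "u ^ Suc m * fps_deriv Y
      = fps_X ^ Suc m * fps_deriv A + c * fps_X ^ m * A - c * fps_deriv u * u ^ m * Y"
    by (simp add: algebra_simps)
  have "u ^ Suc (Suc m) * (fps_X * fps_deriv Y - c * Y)
      = fps_X * u * (u ^ Suc m * fps_deriv Y) - c * u * (u ^ Suc m * Y)"
    by (simp add: algebra_simps)
  also have "\<dots> = fps_X * u * (fps_X ^ Suc m * fps_deriv A + c * fps_X ^ m * A
        - c * fps_deriv u * u ^ m * Y) - c * u * (u ^ Suc m * Y)"
    by (simp only: Y')
  also have "\<dots> = fps_X * u * (fps_X ^ Suc m * fps_deriv A + c * fps_X ^ m * A)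
      - (fps_X * c * fps_deriv u + c * u) * (u ^ Suc m * Y)"
    by (simp add: algebra_simps)
  also have "\<dots> = fps_X ^ Suc (Suc m) * (u * fps_deriv A - c * fps_deriv u * A)"
    by (simp only: IH) (simp add: algebra_simps)
  also have "u * fps_deriv A - c * fps_deriv u * A = exp_subst (periodic_power_numer D v (Suc m))"
    by (simp only: periodic_power_numer.simps A_def fps_deriv_exp_subst exp_subst_add exp_subst_mult
        exp_subst_smult exp_subst_diff exp_subst_1 exp_subst_monom)
       (simp add: u_def c_def fps_of_nat[symmetric] algebra_simps)
  finally show ?case by (simp add: u_def Y_def c_def fps_euler_def)
qed

lemma periodic_exp_fps_times_powers:
  assumes "D \<ge> 1" "m < r"
  defines "u \<equiv> 1 - fps_exp (real D)"
  shows "fps_X ^ r * (u ^ (r - 1 - m) * exp_subst (periodic_power_numer D v m))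
       = u ^ r * (fps_X ^ (r - 1 - m) * periodic_exp_fps D v m)"
proof -
  have "r = (r - 1 - m) + Suc m" using assms(2) by simp
  then have X_r: "fps_X ^ r = fps_X ^ (r - 1 - m) * fps_X ^ Suc m"
    and u_r: "u ^ r = u ^ (r - 1 - m) * u ^ Suc m"
    by (metis power_add)+
  have "fps_X ^ r * (u ^ (r - 1 - m) * exp_subst (periodic_power_numer D v m))
      = fps_X ^ (r - 1 - m) * u ^ (r - 1 - m) *
        (fps_X ^ Suc m * exp_subst (periodic_power_numer D v m))"
    by (simp only: X_r mult_ac)
  also have "\<dots> = fps_X ^ (r - 1 - m) * u ^ (r - 1 - m) * (u ^ Suc m * periodic_exp_fps D v m)"
    by (simp only: one_minus_exp_power_times_periodic_exp_fps[OF assms(1)] u_def)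
  finally show ?thesis by (simp only: u_r mult_ac)
qed

lemma periodic_exp_fps_nth:
  "periodic_exp_fps D v m $ n = periodic_exp_fps D v 0 $ n * (\<Prod>i<m. real n - real i - 1)"
proof (induction m)
  case (Suc m)
  have "periodic_exp_fps D v (Suc m) $ n = (real n - real m - 1) * periodic_exp_fps D v m $ n"
    by (simp add: fps_of_nat[symmetric] algebra_simps)
  then show ?case using Suc.IH by (simp add: algebra_simps)
qed simp

lemma periodic_exp_fps_0_nth:
  assumes "D \<ge> 1"
  shows "periodic_exp_fps D v 0 $ n = - (real D ^ n * bernpoly n (real v / real D) / (real D * fact n))"
proof -
  have W: "exp_minus_one_quot 1 $ 0 \<noteq> 0" by (simp add: exp_minus_one_quot_nth_0)
  have "exp_minus_one_quot D = fps_const (real D) * fps_dilate (real D) (exp_minus_one_quot 1)"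
    by (intro fps_ext) (simp add: fps_dilate_def exp_minus_one_quot_def)
  then have "inverse (exp_minus_one_quot D)
      = fps_const (1 / real D) * fps_dilate (real D) (inverse (exp_minus_one_quot 1))"
    by (simp only: fps_inverse_mult fps_dilate_inverse[OF W] fps_const_inverse inverse_eq_divide)
  moreover have "fps_exp (real v) = fps_dilate (real D) (fps_exp (real v / real D))"
    using assms by (simp add: fps_dilate_exp)
  ultimately have "periodic_exp_fps D v 0
      = - (fps_const (1 / real D) *
           fps_dilate (real D) (fps_exp (real v / real D) * inverse (exp_minus_one_quot 1)))"
    by (simp only: periodic_exp_fps.simps fps_dilate_mult) (simp add: mult_ac)
  then show ?thesis
    by (simp add: fps_dilate_def bernpoly_conv_fps[of n "real v / real D"])
qed

lemma prod_shift_eq_fact_div: "(\<Prod>i<m. real (k + m + 1) - real i - 1) = fact (k + m) / fact k"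
proof (induction m)
  case (Suc m)
  have "(\<Prod>i<Suc m. real (k + Suc m + 1) - real i - 1) =
        real (k + m + 1) * (\<Prod>i<m. real (k + m + 1) - real i - 1)"
    by (simp only: prod.lessThan_Suc_shift) (simp add: algebra_simps)
  then show ?case using Suc.IH by simp
qed simp

lemma bernpoly_conv_periodic_exp_fps:
  assumes "D \<ge> 1"
  shows "real D ^ (k + m + 1) * bernpoly (k + m + 1) (real v / real D) / real (k + m + 1)
       = - (real D * fact k) * periodic_exp_fps D v m $ (k + m + 1)"
proof -
  define B where "B = real D ^ (k + m + 1) * bernpoly (k + m + 1) (real v / real D)"
  define N where "N = real (k + m + 1)"
  have "fact (k + m + 1) = N * fact (k + m)" by (simp add: N_def)
  then have "periodic_exp_fps D v m $ (k + m + 1)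
      = - (B / (real D * (N * fact (k + m)))) * (fact (k + m) / fact k)"
    by (simp only: periodic_exp_fps_nth[of D v m] periodic_exp_fps_0_nth[OF assms]
        prod_shift_eq_fact_div B_def)
  moreover have "N > 0" by (simp add: N_def)
  ultimately show ?thesis
    using assms unfolding B_def[symmetric] N_def[symmetric] by (simp add: field_simps)
qed

section \<open>Bernoulli--Barnes numbers\<close>

lemma fps_prod_nth_0: "(\<Prod>i\<in>A. f i) $ 0 = (\<Prod>i\<in>A. f i $ 0 :: 'a :: comm_ring_1)"
  by (induction A rule: infinite_finite_induct) simp_all

lemma exp_minus_one_quot_prod_nth_0:
  "\<forall>i<length a. a ! i > 0 \<Longrightarrow> (\<Prod>i<length a. exp_minus_one_quot (a ! i)) $ 0 \<noteq> 0"
  by (simp add: fps_prod_nth_0 exp_minus_one_quot_nth_0)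

lemma fps_neg_one_power_mult_nth:
  fixes f :: "'a :: ring_1 fps"
  shows "((-1) ^ r * f) $ n = (-1) ^ r * f $ n"
proof (induction r)
  case (Suc r)
  have "(-1) ^ Suc r * f = - ((-1) ^ r * f)" by simp
  then show ?case using Suc.IH by simp
qed simp

lemma barnes_conv_inverse:
  assumes "\<forall>i<length a. a ! i > 0"
  shows "barnes j a = fact j * inverse (\<Prod>i<length a. exp_minus_one_quot (a ! i)) $ j"
proof -
  define V where "V = (\<Prod>i<length a. exp_minus_one_quot (a ! i))"
  have V0: "V $ 0 \<noteq> 0"
    using exp_minus_one_quot_prod_nth_0[OF assms] by (simp add: V_def)
  have "(\<Prod>i<length a. fps_exp (real (a ! i)) - 1) = fps_X ^ length a * V"
    by (simp add: fps_X_times_exp_minus_one_quot[symmetric] prod.distrib V_def)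
  moreover have "fps_X ^ length a = inverse V * (fps_X ^ length a * V)"
    using inverse_mult_eq_1[OF V0] by (simp add: mult_ac)
  moreover have "fps_X ^ length a * V \<noteq> 0" using V0 by auto
  ultimately have "fps_X ^ length a / (\<Prod>i<length a. fps_exp (real (a ! i)) - 1) = inverse V"
    by (metis fps_divide_times_eq)
  then show ?thesis by (simp add: barnes_def V_def)
qed

section \<open>Linear relations for the quasipolynomial coefficients\<close>

lemma periodic_nat_mod:
  fixes f :: "nat \<Rightarrow> 'a" and D :: nat
  assumes "\<forall>n. f (n + D) = f n"
  shows "f n = f (n mod D)"
proof -
  have "f (x + q * D) = f x" for x q
  proof (induction q)
    case (Suc q)
    then show ?case using assms[rule_format, of "x + q * D"] by (simp add: add_ac)
  qed simp
  from this[of "n mod D" "n div D"] show ?thesis by simp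
qed

lemma sum_lessThan_mult_div_mod:
  fixes g :: "nat \<Rightarrow> nat \<Rightarrow> real"
  assumes "D \<ge> 1"
  shows "(\<Sum>c<r * D. g (c div D) (c mod D + 1)) = (\<Sum>m<r. \<Sum>v\<in>{1..D}. g m v)"
proof (induction r)
  case (Suc r)
  define G where "G c = g (c div D) (c mod D + 1)" for c
  have "{..<Suc r * D} = {..<r * D} \<union> {r * D..<D + r * D}" by auto
  then have "(\<Sum>c<Suc r * D. G c) = (\<Sum>c<r * D. G c) + (\<Sum>c\<in>{r * D..<D + r * D}. G c)"
    by (simp only: sum.union_disjoint[symmetric] finite_lessThan finite_atLeastLessThan
        ivl_disj_int)
  also have "(\<Sum>c\<in>{r * D..<D + r * D}. G c) = (\<Sum>j<D. g r (Suc j))"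
    using assms sum.shift_bounds_nat_ivl[of G 0 "r * D" D] by (simp add: G_def atLeast0LessThan)
  also have "\<dots> = (\<Sum>v\<in>{1..D}. g r v)"
    using sum.atLeast1_atMost_eq[of "g r" D] by simp
  finally show ?case using Suc.IH by (simp add: G_def)
qed simp

locale partition_quasipolynomial =
  fixes a :: "nat list" and D :: nat and d :: "nat \<Rightarrow> nat \<Rightarrow> real"
  assumes parts_pos: "\<forall>i<length a. a ! i > 0"
    and period_pos: "D \<ge> 1"
    and coeff_periodic: "\<forall>m<length a. \<forall>n. d m (n + D) = d m n"
    and part_count_eq: "\<forall>n. real (part_count a n) = (\<Sum>m<length a. d m n * real n ^ m)"
begin

lemma coeff_mod: "m < length a \<Longrightarrow> d m n = d m (n mod D)"
  using coeff_periodic by (intro periodic_nat_mod) auto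

lemma part_fps_minus_one:
  "part_fps a - 1 = (\<Sum>m<length a. \<Sum>v\<in>{1..D}. fps_const (d m v) * periodic_power_fps D v m)"
proof (rule fps_ext)
  fix n
  show "(part_fps a - 1) $ n
      = (\<Sum>m<length a. \<Sum>v\<in>{1..D}. fps_const (d m v) * periodic_power_fps D v m) $ n"
  proof (cases "n = 0")
    case True
    then show ?thesis using part_count_0[OF parts_pos]
      by (simp add: part_fps_def periodic_power_fps_def fps_sum_nth)
  next
    case False
    define w where "w = (if n mod D = 0 then D else n mod D)"
    have w: "w \<in> {1..D}" "w mod D = n mod D"
      using period_pos by (auto simp: w_def intro: Suc_leI)
    have "n mod D < D" using period_pos by simp
    then have iff: "n mod D = v mod D \<longleftrightarrow> v = w" if "v \<in> {1..D}" for v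
      using that by (cases "v = D") (auto simp: w_def)
    have "(\<Sum>v\<in>{1..D}. d m v * (if 1 \<le> n \<and> n mod D = v mod D then real n ^ m else 0))
        = d m w * real n ^ m" for m
    proof -
      have "(\<Sum>v\<in>{1..D}. d m v * (if 1 \<le> n \<and> n mod D = v mod D then real n ^ m else 0))
          = (\<Sum>v\<in>{1..D}. if v = w then d m v * real n ^ m else 0)"
        using False by (intro sum.cong refl) (simp add: iff)
      then show ?thesis using w(1) by simp
    qed
    moreover have "d m w = d m n" if "m < length a" for m
      using coeff_mod[OF that, of w] coeff_mod[OF that, of n] w(2) by simp
    ultimately show ?thesis
      using part_count_eq False by (simp add: part_fps_def periodic_power_fps_def fps_sum_nth)
  qed
qed

text \<open>Only polynomials admit the substitution \<open>x = e\<^sup>z\<close>, as \<open>e\<^sup>z\<close> has nonzero constant term.\<close>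
lemma cleared_poly_identity:
  defines "P \<equiv> \<Prod>i<length a. 1 - monom 1 (a ! i)"
  shows "(1 - monom 1 D) ^ length a * (1 - P)
       = P * (\<Sum>m<length a. \<Sum>v\<in>{1..D}.
                smult (d m v) ((1 - monom 1 D) ^ (length a - 1 - m) * periodic_power_numer D v m))"
proof -
  define r where "r = length a"
  define U :: "real fps" where "U = 1 - fps_X ^ D"
  have UH: "U ^ r * periodic_power_fps D v m
      = U ^ (r - 1 - m) * fps_of_poly (periodic_power_numer D v m)"
    if "m < r" "v \<in> {1..D}" for m v
  proof -
    have "r = (r - 1 - m) + Suc m" using that by simp
    then have "U ^ r = U ^ (r - 1 - m) * U ^ Suc m" by (metis power_add)
    then show ?thesis
      using that one_minus_X_power_times_periodic_power_fps[of v D m]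
      by (simp only: U_def mult.assoc atLeastAtMost_iff)
  qed
  have "1 - fps_of_poly P = (part_fps a - 1) * fps_of_poly P"
    using part_fps_times_prod[OF parts_pos]
    by (simp add: P_def fps_of_poly_prod fps_of_poly_diff fps_of_poly_monom' algebra_simps)
  then have "U ^ r * (1 - fps_of_poly P) = fps_of_poly P *
      (\<Sum>m<r. \<Sum>v\<in>{1..D}. fps_const (d m v) * (U ^ r * periodic_power_fps D v m))"
    unfolding part_fps_minus_one r_def[symmetric]
    by (simp add: sum_distrib_left sum_distrib_right mult_ac)
  also have "\<dots> = fps_of_poly P * (\<Sum>m<r. \<Sum>v\<in>{1..D}.
      fps_const (d m v) * (U ^ (r - 1 - m) * fps_of_poly (periodic_power_numer D v m)))"
    by (intro arg_cong[where f = "(*) (fps_of_poly P)"] sum.cong refl) (simp add: UH)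
  finally have "U ^ r * (1 - fps_of_poly P) = \<dots>" .
  then have "fps_of_poly ((1 - monom 1 D) ^ r * (1 - P)) = fps_of_poly (P * (\<Sum>m<r. \<Sum>v\<in>{1..D}.
      smult (d m v) ((1 - monom 1 D) ^ (r - 1 - m) * periodic_power_numer D v m)))"
    by (simp add: U_def fps_of_poly_mult fps_of_poly_power fps_of_poly_diff fps_of_poly_sum
        fps_of_poly_smult fps_of_poly_monom')
  then show ?thesis by (simp only: fps_of_poly_eq_iff r_def)
qed

definition bernoulli_sum_fps :: "real fps" where
  "bernoulli_sum_fps = (\<Sum>m<length a. \<Sum>v\<in>{1..D}.
     fps_const (d m v) * (fps_X ^ (length a - 1 - m) * periodic_exp_fps D v m))"

lemma exp_prod_identity:
  defines "P \<equiv> \<Prod>i<length a. 1 - fps_exp (real (a ! i))"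
  shows "fps_X ^ length a * (1 - P) = P * bernoulli_sum_fps"
proof -
  define r where "r = length a"
  define u where "u = 1 - fps_exp (real D)"
  define S where "S = (\<Sum>m<r. \<Sum>v\<in>{1..D}. fps_const (d m v) * (u ^ (r - 1 - m) *
                          exp_subst (periodic_power_numer D v m)))"
  have "exp_subst (\<Prod>i<r. 1 - monom 1 (a ! i)) = P"
    by (simp add: P_def r_def exp_subst_prod exp_subst_diff exp_subst_monom)
  then have subst: "u ^ r * (1 - P) = P * S"
    using arg_cong[OF cleared_poly_identity, of exp_subst]
    by (simp add: u_def S_def r_def exp_subst_mult exp_subst_power exp_subst_diff exp_subst_monom
        exp_subst_sum exp_subst_smult)
  have "fps_X ^ r * S = (\<Sum>m<r. \<Sum>v\<in>{1..D}.
      fps_const (d m v) * (u ^ r * (fps_X ^ (r - 1 - m) * periodic_exp_fps D v m)))"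
    unfolding S_def sum_distrib_left
    by (intro sum.cong refl)
       (metis lessThan_iff mult.left_commute u_def periodic_exp_fps_times_powers[OF period_pos])
  also have "\<dots> = u ^ r * bernoulli_sum_fps"
    by (simp add: bernoulli_sum_fps_def r_def sum_distrib_left mult.left_commute)
  finally have "u ^ r * (fps_X ^ r * (1 - P)) = u ^ r * (P * bernoulli_sum_fps)"
    using subst by (metis mult.left_commute)
  moreover have "u \<noteq> 0"
  proof
    assume "u = 0"
    then have "u $ 1 = 0" by simp
    then show False using period_pos by (simp add: u_def)
  qed
  ultimately show ?thesis by (simp add: r_def)
qed

lemma bernoulli_sum_fps_eq:
  "bernoulli_sum_fps =
     (-1) ^ length a * inverse (\<Prod>i<length a. exp_minus_one_quot (a ! i)) - fps_X ^ length a"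
proof -
  define r where "r = length a"
  define V where "V = (\<Prod>i<r. exp_minus_one_quot (a ! i))"
  define P where "P = (\<Prod>i<r. 1 - fps_exp (real (a ! i)))"
  have V0: "V $ 0 \<noteq> 0"
    using exp_minus_one_quot_prod_nth_0[OF parts_pos] by (simp add: V_def r_def)
  have "P = (\<Prod>i<r. - 1 * (fps_X * exp_minus_one_quot (a ! i)))"
    by (simp add: P_def fps_X_times_exp_minus_one_quot)
  also have "\<dots> = (-1) ^ r * (fps_X ^ r * V)"
    by (simp only: prod.distrib prod_constant card_lessThan V_def)
  finally have P: "P = (-1) ^ r * (fps_X ^ r * V)" .
  have "fps_X ^ r * (1 - P) = P * bernoulli_sum_fps"
    unfolding P_def r_def by (rule exp_prod_identity)
  also have "\<dots> = fps_X ^ r * ((-1) ^ r * V * bernoulli_sum_fps)"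
    by (simp add: P mult_ac)
  finally have "1 - P = (-1) ^ r * V * bernoulli_sum_fps" by simp
  then have "(-1) ^ r * inverse V * (1 - P)
      = ((-1) ^ r * (-1) ^ r) * (inverse V * V) * bernoulli_sum_fps"
    by (simp add: mult_ac)
  moreover have "(-1) ^ r * (-1) ^ r = (1 :: real fps)"
    by (simp flip: power_mult_distrib)
  moreover have "inverse V * V = 1" by (rule inverse_mult_eq_1[OF V0])
  ultimately show ?thesis
    by (simp add: P algebra_simps r_def V_def)
qed

lemma bernoulli_barnes_relation:
  assumes "length a \<ge> 1" "k \<ge> 1"
  shows "(\<Sum>m<length a. \<Sum>v\<in>{1..D}. d m v *
            (real D ^ (k + m + 1) * bernpoly (k + m + 1) (real v / real D) / real (k + m + 1)))
       = (-1) ^ (length a - 1) * fact k * real D / fact (k + length a) * barnes (k + length a) a"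
proof -
  define r where "r = length a"
  have "(\<Sum>m<r. \<Sum>v\<in>{1..D}. d m v * periodic_exp_fps D v m $ (k + m + 1))
      = bernoulli_sum_fps $ (k + r)"
    unfolding bernoulli_sum_fps_def fps_sum_nth r_def
    by (intro sum.cong refl) (auto simp: fps_X_power_mult_nth)
  also have "\<dots> = (-1) ^ r * barnes (k + r) a / fact (k + r)"
    using assms(2) by (simp add: bernoulli_sum_fps_eq barnes_conv_inverse[OF parts_pos]
        fps_neg_one_power_mult_nth r_def)
  finally have side: "(\<Sum>m<r. \<Sum>v\<in>{1..D}. d m v * periodic_exp_fps D v m $ (k + m + 1))
      = (-1) ^ r * barnes (k + r) a / fact (k + r)" .
  have "(\<Sum>m<r. \<Sum>v\<in>{1..D}. d m v *
            (real D ^ (k + m + 1) * bernpoly (k + m + 1) (real v / real D) / real (k + m + 1)))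
      = (\<Sum>m<r. \<Sum>v\<in>{1..D}. d m v * (- (real D * fact k) * periodic_exp_fps D v m $ (k + m + 1)))"
    by (simp only: bernpoly_conv_periodic_exp_fps[OF period_pos])
  also have "\<dots> = - (real D * fact k) * ((-1) ^ r * barnes (k + r) a / fact (k + r))"
    by (simp add: side[symmetric] sum_distrib_left mult_ac)
  also have "(-1 :: real) ^ r = - ((-1) ^ (r - 1))"
    using assms(1) by (cases r) (simp_all add: r_def)
  finally show ?thesis by (simp add: r_def)
qed

definition coeff_vec :: "real vec" where
  "coeff_vec = vec (length a * D) (\<lambda>c. d (c div D) (c mod D + 1))"

definition barnes_vec :: "(nat \<Rightarrow> nat) \<Rightarrow> real vec" where
  "barnes_vec alpha = vec (length a * D) (\<lambda>i.
     (-1) ^ (length a - 1) * fact (alpha (i + 1) - 1) * real D / fact (alpha (i + 1) + length a - 1)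
       * barnes (alpha (i + 1) + length a - 1) a)"

lemma coeff_mat_mult_coeff_vec:
  assumes "length a \<ge> 1" and alpha: "\<forall>j\<in>{1..length a * D}. alpha j \<ge> 2"
  shows "coeff_mat (length a) D alpha *\<^sub>v coeff_vec = barnes_vec alpha"
proof (rule eq_vecI)
  fix i assume "i < dim_vec (barnes_vec alpha)"
  then have i: "i < length a * D" by (simp add: barnes_vec_def)
  define k where "k = alpha (i + 1) - 1"
  have "alpha (i + 1) \<ge> 2" using alpha i by simp
  then have k: "alpha (i + 1) = k + 1" "k \<ge> 1" by (simp_all add: k_def)
  have "vec_index (coeff_mat (length a) D alpha *\<^sub>v coeff_vec) i
      = (\<Sum>c<length a * D. d (c div D) (c mod D + 1) * (real D ^ (k + c div D + 1)
          * bernpoly (k + c div D + 1) (real (c mod D + 1) / real D) / real (k + c div D + 1)))"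
    using i k
    by (simp add: coeff_mat_def coeff_vec_def scalar_prod_def atLeast0LessThan Let_def ac_simps)
  also have "\<dots> = (\<Sum>m<length a. \<Sum>v\<in>{1..D}. d m v *
      (real D ^ (k + m + 1) * bernpoly (k + m + 1) (real v / real D) / real (k + m + 1)))"
    by (rule sum_lessThan_mult_div_mod[OF period_pos])
  also have "\<dots> = (-1) ^ (length a - 1) * fact k * real D / fact (k + length a) * barnes (k + length a) a"
    by (rule bernoulli_barnes_relation[OF assms(1) k(2)])
  also have "\<dots> = vec_index (barnes_vec alpha) i"
    using i k by (simp add: barnes_vec_def)
  finally show "vec_index (coeff_mat (length a) D alpha *\<^sub>v coeff_vec) i
      = vec_index (barnes_vec alpha) i" .
qed (simp add: coeff_mat_def barnes_vec_def)

lemma repl_mat_eq_replace_col: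
  "repl_mat a D alpha m v
     = replace_col (coeff_mat (length a) D alpha) (barnes_vec alpha) (m * D + v - 1)"
  by (rule eq_matI) (simp_all add: repl_mat_def replace_col_def barnes_vec_def coeff_mat_def Let_def)

lemma coeff_eq_det_ratio:
  assumes "length a \<ge> 1" and alpha: "\<forall>j\<in>{1..length a * D}. alpha j \<ge> 2"
    and nonsingular: "det (coeff_mat (length a) D alpha) \<noteq> 0"
    and m: "m < length a" and v: "v \<in> {1..D}"
  shows "d m v = det (repl_mat a D alpha m v) / det (coeff_mat (length a) D alpha)"
proof -
  define c where "c = m * D + v - 1"
  have "m * D + v \<le> Suc m * D" using v by simp
  also have "\<dots> \<le> length a * D" using m by (intro mult_right_mono) auto
  finally have "c < length a * D" using v unfolding c_def by arith
  moreover have c_eq: "c = (v - 1) + m * D" using v by (simp add: c_def)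
  have "v - 1 < D" "D > 0" using v by auto
  then have "c div D = m" "c mod D = v - 1"
    unfolding c_eq mod_mult_self1 by simp_all
  then have "c div D = m" "c mod D + 1 = v" using v by simp_all
  ultimately have c: "c < length a * D" "c div D = m" "c mod D + 1 = v" by blast+
  have "det (repl_mat a D alpha m v) = vec_index coeff_vec c * det (coeff_mat (length a) D alpha)"
    unfolding repl_mat_eq_replace_col coeff_mat_mult_coeff_vec[OF assms(1,2), symmetric]
      c_def[symmetric]
    by (rule cramer_lemma_mat[where n = "length a * D"])
       (simp_all add: coeff_mat_def coeff_vec_def c(1))
  then show ?thesis
    using nonsingular c by (simp add: coeff_vec_def)
qed

end

theorem proposition1p1:
  fixes a :: "nat list" and D :: nat and d :: "nat \<Rightarrow> nat \<Rightarrow> real"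
    and alpha :: "nat \<Rightarrow> nat"
  assumes r_pos: "length a \<ge> 1"
    and a_pos: "\<forall>i < length a. a ! i > 0"
    and D_pos: "D \<ge> 1"
    and D_mult: "\<forall>i < length a. a ! i dvd D"
    and d_per: "\<forall>m < length a. \<forall>n. d m (n + D) = d m n"
    and d_quasi: "\<forall>n. real (part_count a n) = (\<Sum>m < length a. d m n * real n ^ m)"
    and alpha_ge: "alpha 1 \<ge> 2"
    and alpha_inc: "\<forall>j k. 1 \<le> j \<and> j < k \<and> k \<le> length a * D \<longrightarrow> alpha j < alpha k"
    and Delta_nz: "det (coeff_mat (length a) D alpha) \<noteq> 0"
  shows "(\<forall>v \<in> {1..D}. \<forall>m < length a.
            d m v = det (repl_mat a D alpha m v) / det (coeff_mat (length a) D alpha))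
       \<and> (\<forall>n v. v \<in> {1..D} \<and> v mod D = n mod D \<longrightarrow>
            real (part_count a n) = 1 / det (coeff_mat (length a) D alpha) *
              (\<Sum>m < length a. det (repl_mat a D alpha m v) * real n ^ m))"
proof -
  interpret partition_quasipolynomial a D d
    using a_pos D_pos d_per d_quasi by unfold_locales
  have "\<forall>j\<in>{1..length a * D}. alpha j \<ge> 2"
    using alpha_ge alpha_inc by (metis atLeastAtMost_iff le_less less_le_trans)
  then have coeffs: "d m v = det (repl_mat a D alpha m v) / det (coeff_mat (length a) D alpha)"
    if "v \<in> {1..D}" "m < length a" for m v
    using coeff_eq_det_ratio[OF r_pos _ Delta_nz] that by blast
  moreover have "real (part_count a n) = 1 / det (coeff_mat (length a) D alpha) *
      (\<Sum>m < length a. det (repl_mat a D alpha m v) * real n ^ m)"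
    if "v \<in> {1..D}" "v mod D = n mod D" for n v
  proof -
    have "d m n = d m v" if "m < length a" for m
      using coeff_mod[OF that, of n] coeff_mod[OF that, of v] \<open>v mod D = n mod D\<close> by simp
    then show ?thesis
      using d_quasi coeffs[OF \<open>v \<in> {1..D}\<close>] by (simp add: sum_distrib_left)
  qed
  ultimately show ?thesis by blast
qed

end
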